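(* Let $L$ be a factorial $W^*$-lattice of type $I_n$. Then (a) for every $l\in L$, $\bigvee_{m\in Min(l)}m=l$; (b) for all $l,l'\in L$, $l\le l'$ if and only if $Min(l)\subseteq Min(l')$.
   Context: Orthocomplemented lattice (paper's convention): a set $L$ with a partial order $\le$ in which every subset has a supremum and an infimum ($l\vee l'$, $l\wedge l'$ denote binary sup/inf, $0=\inf L$, $1=\sup L$), such that: (continuity) for every increasing net $(l_i)$ and every $l$, $\bigvee_i(l\wedge l_i)=l\wedge\bigvee_i l_i$, and for every decreasing net $(l_i)$ and every $l$, $\bigwedge_i(l\vee l_i)=l\vee\bigwedge_i l_i$; (modularity) $l\le l''$ implies $(l\vee l')\wedge l''=l\vee(l'\wedge l'')$ for all $l'$; together with a map $l\mapsto l^\perp$, also written $1-l$, satisfying $l^{\perp\perp}=l$, $l\vee l^\perp=1$, $l\wedge l^\perp=0$, and $l\le l'\Rightarrow l'^\perp\le l^\perp$. For $l'\le l$ put $l-l'=(1-l')\wedge l$. Write $\perp(l)=\{l'\in L: l'\le 1-l\}$; elements of $\perp(l)$ are orthogonal to $l$; a family is mutually orthogonal if any two distinct members are orthogonal. $l$ commutes with $l'$ if $l=(l\wedge l')\vee(l\wedge l'^\perp)$; $c(l)$ is the set of elements commuting with $l$; $C(L)=\bigcap_{l\in L}c(l)$. $L$ is factorial if $C(L)=\{0,1\}$ and abelian if $C(L)=L$. For $l\in L$, $L\wedge l=\{l'\in L:l'\le l\}$ is an orthocomplemented lattice with complement $l'\mapsto l-l'$; $l$ is an abelian element if $L\wedge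 l$ is abelian. $L$ is an R-lattice if $C(L\wedge l)=\{c\wedge l: c\in C(L)\}$ for every $l\in L$. An element $l\ne 0$ is minimal if for every $l'\in L$ either $l\wedge l'=0$ or $l\wedge l'=l$; $Min(L)$ is the set of minimal elements and $Min(l)=\{m\in Min(L): m\le l\}$. Regular equivalence relation: for an equivalence relation $\sim$ on $L$ write $l\le_\sim l'$ if there is $l''\le l'$ with $l\sim l''$. $\sim$ is regular if: (1) $l\sim 0\iff l=0$; (2) $l\ge l'$ and $l\le_\sim l'$ imply $l\sim l'$; (3) for all $l,l'$, $l\le_\sim l'$ or $l'\le_\sim l$; (4) if $(l_i)$, $(l_i')$ are families of mutually orthogonal elements with $l_i\sim l_i'$ for all $i$, then $\bigvee_i l_i\sim\bigvee_i l_i'$; (5) $l'\le l$ and $l'\sim l$ imply $l'=l$. A family $(l_i)_{i\in I}$ is independent if for every partition $\{J,K\}$ of $I$, $\bigvee_{i\in J}l_i\wedge\bigvee_{i\in K}l_i=0$. A $\sim$-compatible dimension function is a map $D:L\to[0,1]$ with $D(0)=0$, $D(1)=1$, $D(l\vee l')+D(l\wedge l')=D(l)+D(l')$, $D(l)=D(l')\iff l\sim l'$, $D(l)\le D(l')\iff l\le_\sim l'$, and $D(\bigvee_i l_i)=\sum_i D(l_i)$ for every finite or countable independent family. A factorial R-lattice $L$ is of type $I_n$ if it carries a regular equivalence relation $\sim$ and a $\sim$-compatible dimension function $D$ with $D(L)=\{0,\frac1n,\dots,\frac{n-1}{n},1\}$. A factorial $W^*$-lattice of type $I_n$ is a factorial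 R-lattice of type $I_n$ whose cardinality equals that of $\mathbb R$. *)

theory Defs
  imports "HOL-Analysis.Analysis"
begin

text \<open>The lattice L is the whole type 'a (a complete lattice: every subset has
sup and inf); the orthocomplement is the function oc (written 1 - l in the paper).\<close>

definition ortho_lattice :: "('a::complete_lattice \<Rightarrow> 'a) \<Rightarrow> bool" where
  "ortho_lattice oc \<longleftrightarrow>
     \<comment> \<open>continuity (increasing nets = upward directed subsets, decreasing nets = downward directed subsets)\<close>
     (\<forall>(D::'a set) l. (\<forall>x\<in>D. \<forall>y\<in>D. \<exists>z\<in>D. x \<le> z \<and> y \<le> z) \<longrightarrow>
             Sup ((\<lambda>x. inf l x) ` D) = inf l (Sup D)) \<and>
     (\<forall>(D::'a set) l. (\<forall>x\<in>D. \<forall>y\<in>D. \<exists>z\<in>D. z \<le> x \<and> z \<le> y) \<longrightarrow>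
             Inf ((\<lambda>x. sup l x) ` D) = sup l (Inf D)) \<and>
     \<comment> \<open>modularity\<close>
     (\<forall>(l::'a) l' l''. l \<le> l'' \<longrightarrow> inf (sup l l') l'' = sup l (inf l' l'')) \<and>
     \<comment> \<open>orthocomplementation\<close>
     (\<forall>l. oc (oc l) = l) \<and>
     (\<forall>l. sup l (oc l) = top) \<and>
     (\<forall>l. inf l (oc l) = bot) \<and>
     (\<forall>l l'. l \<le> l' \<longrightarrow> oc l' \<le> oc l)"

text \<open>Relative complement in the interval lattice L \<and> u: x \<mapsto> u - x = oc x \<sqinter> u.\<close>
definition rel_compl :: "('a::complete_lattice \<Rightarrow> 'a) \<Rightarrow> 'a \<Rightarrow> 'a \<Rightarrow> 'a" where
  "rel_compl oc u x = inf (oc x) u"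

definition commutes_in :: "('a::complete_lattice \<Rightarrow> 'a) \<Rightarrow> 'a \<Rightarrow> 'a \<Rightarrow> 'a \<Rightarrow> bool" where
  "commutes_in oc u x y \<longleftrightarrow> x = sup (inf x y) (inf x (rel_compl oc u y))"

text \<open>Centre C(L \<and> u); C(L) is centre_in oc top.\<close>
definition centre_in :: "('a::complete_lattice \<Rightarrow> 'a) \<Rightarrow> 'a \<Rightarrow> 'a set" where
  "centre_in oc u = {x. x \<le> u \<and> (\<forall>y. y \<le> u \<longrightarrow> commutes_in oc u x y)}"

definition factorial :: "('a::complete_lattice \<Rightarrow> 'a) \<Rightarrow> bool" where
  "factorial oc \<longleftrightarrow> centre_in oc top = {bot, top}"

definition R_lattice :: "('a::complete_lattice \<Rightarrow> 'a) \<Rightarrow> bool" where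
  "R_lattice oc \<longleftrightarrow> ortho_lattice oc \<and>
     (\<forall>l. centre_in oc l = {inf c l | c. c \<in> centre_in oc top})"

definition mutually_orthogonal :: "('a::complete_lattice \<Rightarrow> 'a) \<Rightarrow> 'i set \<Rightarrow> ('i \<Rightarrow> 'a) \<Rightarrow> bool" where
  "mutually_orthogonal oc I f \<longleftrightarrow> (\<forall>i\<in>I. \<forall>j\<in>I. i \<noteq> j \<longrightarrow> f i \<le> oc (f j))"

definition le_sim :: "('a::complete_lattice \<Rightarrow> 'a \<Rightarrow> bool) \<Rightarrow> 'a \<Rightarrow> 'a \<Rightarrow> bool" where
  "le_sim sim l l' \<longleftrightarrow> (\<exists>l''. l'' \<le> l' \<and> sim l l'')"

text \<open>Regular equivalence relation. Families in (4) are indexed by subsets of L itself.\<close>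
definition regular_equiv :: "('a::complete_lattice \<Rightarrow> 'a) \<Rightarrow> ('a \<Rightarrow> 'a \<Rightarrow> bool) \<Rightarrow> bool" where
  "regular_equiv oc sim \<longleftrightarrow> equivp sim \<and>
     (\<forall>l. sim l bot \<longleftrightarrow> l = bot) \<and>
     (\<forall>l l'. l' \<le> l \<and> le_sim sim l l' \<longrightarrow> sim l l') \<and>
     (\<forall>l l'. le_sim sim l l' \<or> le_sim sim l' l) \<and>
     (\<forall>(I::'a set) f g. mutually_orthogonal oc I f \<and> mutually_orthogonal oc I g \<and>
         (\<forall>i\<in>I. sim (f i) (g i)) \<longrightarrow> sim (Sup (f ` I)) (Sup (g ` I))) \<and>
     (\<forall>l l'. l' \<le> l \<and> sim l' l \<longrightarrow> l' = l)"

definition independent :: "'i set \<Rightarrow> ('i \<Rightarrow> 'a::complete_lattice) \<Rightarrow> bool" where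
  "independent I f \<longleftrightarrow>
     (\<forall>J K. J \<union> K = I \<and> J \<inter> K = {} \<longrightarrow> inf (Sup (f ` J)) (Sup (f ` K)) = bot)"

text \<open>Finite or countable families are indexed by subsets of nat.\<close>
definition dimension_function ::
  "('a::complete_lattice \<Rightarrow> 'a \<Rightarrow> bool) \<Rightarrow> ('a \<Rightarrow> real) \<Rightarrow> bool" where
  "dimension_function sim D \<longleftrightarrow>
     (\<forall>l. 0 \<le> D l \<and> D l \<le> 1) \<and> D bot = 0 \<and> D top = 1 \<and>
     (\<forall>l l'. D (sup l l') + D (inf l l') = D l + D l') \<and>
     (\<forall>l l'. D l = D l' \<longleftrightarrow> sim l l') \<and>
     (\<forall>l l'. D l \<le> D l' \<longleftrightarrow> le_sim sim l l') \<and>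
     (\<forall>(I::nat set) f. independent I f \<longrightarrow> ((\<lambda>i. D (f i)) has_sum D (Sup (f ` I))) I)"

definition type_I :: "('a::complete_lattice \<Rightarrow> 'a) \<Rightarrow> nat \<Rightarrow> bool" where
  "type_I oc n \<longleftrightarrow> factorial oc \<and> R_lattice oc \<and>
     (\<exists>sim D. regular_equiv oc sim \<and> dimension_function sim D \<and>
        range D = {real k / real n | k. k \<le> n})"

definition W_star_type_I :: "('a::complete_lattice \<Rightarrow> 'a) \<Rightarrow> nat \<Rightarrow> bool" where
  "W_star_type_I oc n \<longleftrightarrow> type_I oc n \<and> (\<exists>h. bij_betw h (UNIV::'a set) (UNIV::real set))"

definition minimal :: "'a::complete_lattice \<Rightarrow> bool" where
  "minimal l \<longleftrightarrow> l \<noteq> bot \<and> (\<forall>l'. inf l l' = bot \<or> inf l l' = l)"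

definition Min_below :: "'a::complete_lattice \<Rightarrow> 'a set" where
  "Min_below l = {m. minimal m \<and> m \<le> l}"

end

theory Submission
  imports Defs
begin

text \<open>
  A lattice of type I_n carries a dimension function D taking only the
  finitely many values k/n, and D is strictly monotone (axiom (5) of a regular
  equivalence).  Hence every nonzero l lies above a minimal element: take a nonzero
  x \<le> l of least dimension.  In other words the lattice is atomic.

  In an atomic orthocomplemented modular lattice every l is the join s of the minimal
  elements below it: by modularity l = s \<squnion> (oc s \<sqinter> l), and a minimal element
  below oc s \<sqinter> l would lie below both s and its complement oc s, which is impossible.
  Part (b) follows, since l \<le> l' is then equivalent to the inclusion of the sets of
  minimal elements.
\<close>

definition atomic :: "'a::complete_lattice itself \<Rightarrow> bool" where
  "atomic _ \<longleftrightarrow> (\<forall>l::'a. l \<noteq> bot \<longrightarrow> (\<exists>m. minimal m \<and> m \<le> l))"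

lemma ortho_lattice_modular:
  fixes oc :: "'a::complete_lattice \<Rightarrow> 'a" and a b c :: 'a
  assumes "ortho_lattice oc" and "a \<le> c"
  shows "inf (sup a b) c = sup a (inf b c)"
  using assms unfolding ortho_lattice_def by blast

lemma ortho_lattice_sup_compl:
  fixes oc :: "'a::complete_lattice \<Rightarrow> 'a"
  assumes "ortho_lattice oc"
  shows "sup a (oc a) = top"
  using assms unfolding ortho_lattice_def by blast

lemma ortho_lattice_inf_compl:
  fixes oc :: "'a::complete_lattice \<Rightarrow> 'a"
  assumes "ortho_lattice oc"
  shows "inf a (oc a) = bot"
  using assms unfolding ortho_lattice_def by blast

text \<open>A compatible dimension function is strictly monotone: equal dimension of
  comparable elements forces equality by axiom (5) of a regular equivalence.\<close>
lemma dimension_strict_mono: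
  fixes oc :: "'a::complete_lattice \<Rightarrow> 'a" and D :: "'a \<Rightarrow> real"
  assumes reg: "regular_equiv oc sim" and dim: "dimension_function sim D"
    and "x < y"
  shows "D x < D y"
proof -
  have "sim x x" using dim unfolding dimension_function_def by blast
  with \<open>x < y\<close> have "le_sim sim x y" unfolding le_sim_def using less_imp_le by blast
  hence le: "D x \<le> D y" using dim unfolding dimension_function_def by blast
  have "D x \<noteq> D y"
  proof
    assume "D x = D y"
    hence "sim x y" using dim unfolding dimension_function_def by blast
    hence "x = y" using reg \<open>x < y\<close> unfolding regular_equiv_def by auto
    thus False using \<open>x < y\<close> by simp
  qed
  with le show ?thesis by simp
qed

text \<open>If the dimension function takes only finitely many values, the lattice is
  atomic: a nonzero element of least dimension below l is minimal.\<close>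
lemma atomic_if_finite_dimension_range:
  fixes oc :: "'a::complete_lattice \<Rightarrow> 'a" and D :: "'a \<Rightarrow> real"
  assumes reg: "regular_equiv oc sim" and dim: "dimension_function sim D"
    and fin: "finite (range D)"
  shows "atomic TYPE('a)"
  unfolding atomic_def
proof (intro allI impI)
  fix l :: 'a
  assume "l \<noteq> bot"
  define S where "S = {D x | x. x \<le> l \<and> x \<noteq> bot}"
  have finS: "finite S" using fin by (rule finite_subset[rotated]) (auto simp: S_def)
  have "S \<noteq> {}" using \<open>l \<noteq> bot\<close> unfolding S_def by auto
  with finS have "Min S \<in> S" by simp
  then obtain x where x: "x \<le> l" "x \<noteq> bot" "D x = Min S" unfolding S_def by auto
  have "minimal x" unfolding minimal_def
  proof (intro conjI allI)
    show "x \<noteq> bot" by fact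
  next
    fix y
    show "inf x y = bot \<or> inf x y = x"
    proof (rule ccontr)
      assume c: "\<not> (inf x y = bot \<or> inf x y = x)"
      hence "inf x y < x" by (simp add: less_le)
      hence "D (inf x y) < D x" by (rule dimension_strict_mono[OF reg dim])
      moreover have "D (inf x y) \<in> S" unfolding S_def using c x(1) le_infI1 by blast
      hence "Min S \<le> D (inf x y)" using finS by simp
      ultimately show False using x(3) by simp
    qed
  qed
  with x(1) show "\<exists>m. minimal m \<and> m \<le> l" by blast
qed

lemma Sup_Min_below:
  fixes oc :: "'a::complete_lattice \<Rightarrow> 'a" and l :: 'a
  assumes ol: "ortho_lattice oc" and at: "atomic TYPE('a)"
  shows "Sup (Min_below l) = l"
proof -
  define s where "s = Sup (Min_below l)"
  define r where "r = inf (oc s) l"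
  have "s \<le> l" unfolding s_def Min_below_def by (auto intro: Sup_least)
  hence "inf (sup s (oc s)) l = sup s r"
    unfolding r_def by (rule ortho_lattice_modular[OF ol])
  hence "sup s r = inf (sup s (oc s)) l" by (rule sym)
  also have "\<dots> = l" by (simp add: ortho_lattice_sup_compl[OF ol])
  finally have split: "sup s r = l" .
  have "r = bot"
  proof (rule ccontr)
    assume "r \<noteq> bot"
    then obtain m where m: "minimal m" "m \<le> r" using at unfolding atomic_def by blast
    hence "m \<in> Min_below l" unfolding Min_below_def r_def by simp
    hence "m \<le> s" unfolding s_def by (rule Sup_upper)
    moreover have "m \<le> oc s" using m(2) unfolding r_def by simp
    ultimately have "m \<le> inf s (oc s)" by simp
    hence "m = bot" by (simp add: ortho_lattice_inf_compl[OF ol] bot_unique)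
    thus False using m(1) unfolding minimal_def by simp
  qed
  with split s_def show ?thesis by simp
qed

lemma le_iff_Min_below_subset:
  fixes l l' :: "'a::complete_lattice"
  assumes join: "\<And>x::'a. Sup (Min_below x) = x"
  shows "l \<le> l' \<longleftrightarrow> Min_below l \<subseteq> Min_below l'"
proof
  assume "l \<le> l'"
  thus "Min_below l \<subseteq> Min_below l'" unfolding Min_below_def by auto
next
  assume "Min_below l \<subseteq> Min_below l'"
  hence "Sup (Min_below l) \<le> Sup (Min_below l')" by (rule Sup_subset_mono)
  thus "l \<le> l'" by (simp add: join)
qed

theorem mainTheorem16:
  fixes oc :: "'a::complete_lattice \<Rightarrow> 'a" and n :: nat
  assumes "W_star_type_I oc n"
  shows "(\<forall>l::'a. Sup (Min_below l) = l) \<and>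
         (\<forall>(l::'a) l'. l \<le> l' \<longleftrightarrow> Min_below l \<subseteq> Min_below l')"
proof -
  have ti: "type_I oc n" using assms unfolding W_star_type_I_def by blast
  then obtain sim D where reg: "regular_equiv oc sim" and dim: "dimension_function sim D"
    and rD: "range D = {real k / real n | k. k \<le> n}" unfolding type_I_def by blast
  have ol: "ortho_lattice oc" using ti unfolding type_I_def R_lattice_def by blast
  have "range D = (\<lambda>k. real k / real n) ` {..n}" using rD by auto
  hence "finite (range D)" by simp
  hence at: "atomic TYPE('a)" by (rule atomic_if_finite_dimension_range[OF reg dim])
  have join: "\<And>l::'a. Sup (Min_below l) = l" by (rule Sup_Min_below[OF ol at])
  show ?thesis by (simp add: join le_iff_Min_below_subset[OF join])
qed

end
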